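(* Let $\mathsf M$ be an oriented matroid with set of topes $\mathcal T$ and tope-pairs poset $\mathcal Q$. For $(R,T)\in\mathcal Q$ set $\rho(R,T):=(-T,R)$. Then $\rho$ is a poset isomorphism $\mathcal Q\to\mathcal Q^{op}$, and $\rho^4=\mathrm{id}$.
   Context: Topes of an oriented matroid on ground set $E$ are sign vectors in $\{+,-,0\}^E$ (the maximal covectors); $-T$ is componentwise negation, and the negative of a tope is a tope. The separating set of sign vectors is $S(X,Y)=\{e\in E: X_e=-Y_e\neq0\}$; for a tope $B$, $T\le_B R$ iff $S(B,T)\subseteq S(B,R)$. The tope-pairs poset $\mathcal Q$ is $\mathcal T\times\mathcal T$ with $(T,R)\le(T',R')$ iff $T\le_{T'}R\le_{T'}R'$. $\mathcal Q^{op}$ is the same set with the reversed order. *)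

theory Defs
  imports Main
begin

datatype sign = Pos | Neg | Zero

type_synonym 'e signvec = "'e \<Rightarrow> sign"

fun sneg :: "sign \<Rightarrow> sign" where
  "sneg Pos = Neg" | "sneg Neg = Pos" | "sneg Zero = Zero"

definition vneg :: "'e signvec \<Rightarrow> 'e signvec" where
  "vneg X = (\<lambda>e. sneg (X e))"

definition zero_vec :: "'e signvec" where
  "zero_vec = (\<lambda>e. Zero)"

definition vcomp :: "'e signvec \<Rightarrow> 'e signvec \<Rightarrow> 'e signvec" where
  "vcomp X Y = (\<lambda>e. if X e \<noteq> Zero then X e else Y e)"

definition sep :: "'e set \<Rightarrow> 'e signvec \<Rightarrow> 'e signvec \<Rightarrow> 'e set" where
  "sep E X Y = {e \<in> E. X e = sneg (Y e) \<and> X e \<noteq> Zero}"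

definition conf_le :: "'e set \<Rightarrow> 'e signvec \<Rightarrow> 'e signvec \<Rightarrow> bool" where
  "conf_le E X Y \<longleftrightarrow> (\<forall>e\<in>E. X e = Zero \<or> X e = Y e)"

text \<open>Covector axioms for an oriented matroid on the finite ground set E;
  sign vectors are functions vanishing outside E.\<close>
definition oriented_matroid :: "'e set \<Rightarrow> 'e signvec set \<Rightarrow> bool" where
  "oriented_matroid E L \<longleftrightarrow>
     finite E \<and>
     (\<forall>X\<in>L. \<forall>e. e \<notin> E \<longrightarrow> X e = Zero) \<and>
     zero_vec \<in> L \<and>
     (\<forall>X\<in>L. vneg X \<in> L) \<and>
     (\<forall>X\<in>L. \<forall>Y\<in>L. vcomp X Y \<in> L) \<and>
     (\<forall>X\<in>L. \<forall>Y\<in>L. \<forall>e\<in>sep E X Y. \<exists>Z\<in>L. Z e = Zero \<and>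
         (\<forall>f\<in>E - sep E X Y. Z f = vcomp X Y f))"

definition topes :: "'e set \<Rightarrow> 'e signvec set \<Rightarrow> 'e signvec set" where
  "topes E L = {T \<in> L. \<forall>X\<in>L. conf_le E T X \<longrightarrow> X = T}"

definition tope_le :: "'e set \<Rightarrow> 'e signvec \<Rightarrow> 'e signvec \<Rightarrow> 'e signvec \<Rightarrow> bool" where
  "tope_le E B T R \<longleftrightarrow> sep E B T \<subseteq> sep E B R"

definition Q_le :: "'e set \<Rightarrow> 'e signvec \<times> 'e signvec \<Rightarrow> 'e signvec \<times> 'e signvec \<Rightarrow> bool" where
  "Q_le E p q \<longleftrightarrow> (case p of (T, R) \<Rightarrow> case q of (T', R') \<Rightarrow>
      tope_le E T' T R \<and> tope_le E T' R R')"

definition rho :: "'e signvec \<times> 'e signvec \<Rightarrow> 'e signvec \<times> 'e signvec" where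
  "rho p = (case p of (R, T) \<Rightarrow> (vneg T, R))"

end

theory Submission
  imports Defs
begin

text \<open>All topes have the same support, so on it any two topes either agree or are opposite.
  Measuring everything from a base tope, separating sets then behave like subsets of the
  support: negating the base complements them, and changing the base is a symmetric
  difference. In these coordinates, with \<open>a = S(T',T)\<close>, \<open>b = S(T',R)\<close>, \<open>c = S(T',R')\<close>,
  both \<open>(T,R) \<le> (T',R')\<close> and \<open>\<rho>(T',R') \<le> \<rho>(T,R)\<close> say \<open>a \<subseteq> b \<subseteq> c\<close>; and \<open>\<rho>\<^sup>4 = id\<close> is
  immediate from \<open>--T = T\<close>.\<close>

lemma sneg_sneg [simp]: "sneg (sneg x) = x"
  by (cases x) auto

lemma sneg_eq_Zero_iff [simp]: "sneg x = Zero \<longleftrightarrow> x = Zero"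
  by (cases x) auto

lemma vneg_apply: "vneg X e = sneg (X e)"
  by (simp add: vneg_def)

lemma vneg_vneg [simp]: "vneg (vneg X) = X"
  by (simp add: vneg_def)

lemma conf_le_vneg_iff: "conf_le E (vneg X) Y \<longleftrightarrow> conf_le E X (vneg Y)"
  by (auto simp: conf_le_def vneg_def) (metis sneg_sneg)+

lemma vneg_in_topes:
  assumes om: "oriented_matroid E L" and T: "T \<in> topes E L"
  shows "vneg T \<in> topes E L"
proof -
  have "vneg T \<in> L" using om T by (auto simp: oriented_matroid_def topes_def)
  moreover have "X = vneg T" if "X \<in> L" "conf_le E (vneg T) X" for X
  proof -
    have "vneg X \<in> L" using om \<open>X \<in> L\<close> by (simp add: oriented_matroid_def)
    moreover have "conf_le E T (vneg X)" using that(2) by (simp add: conf_le_vneg_iff)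
    ultimately have "vneg X = T" using T by (auto simp: topes_def)
    then show ?thesis by auto
  qed
  ultimately show ?thesis by (auto simp: topes_def)
qed

lemma topes_zero_iff:
  assumes om: "oriented_matroid E L" and A: "A \<in> topes E L" and B: "B \<in> topes E L"
    and "e \<in> E"
  shows "A e = Zero \<longleftrightarrow> B e = Zero"
proof -
  have support_mono: "Y e = Zero" if X: "X \<in> topes E L" and Y: "Y \<in> topes E L"
    and "X e = Zero" for X Y
  proof -
    have "vcomp X Y \<in> L" using om X Y by (auto simp: oriented_matroid_def topes_def)
    moreover have "conf_le E X (vcomp X Y)" by (auto simp: conf_le_def vcomp_def)
    ultimately have "vcomp X Y = X" using X by (auto simp: topes_def)
    then show ?thesis using \<open>X e = Zero\<close> by (metis vcomp_def)
  qed
  show ?thesis using support_mono[OF A B] support_mono[OF B A] by blast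
qed

lemma sep_vneg_vneg [simp]: "sep E (vneg A) (vneg B) = sep E A B"
  by (auto simp: sep_def vneg_apply) (metis sneg_sneg)

lemma sep_subset_sep_vneg_self: "sep E A B \<subseteq> sep E A (vneg A)"
  by (auto simp: sep_def vneg_apply)

lemma sep_vneg_self_topes:
  assumes "oriented_matroid E L" "A \<in> topes E L" "B \<in> topes E L"
  shows "sep E A (vneg A) = sep E B (vneg B)"
  using topes_zero_iff[OF assms] by (auto simp: sep_def vneg_apply)

lemma sep_sym_topes:
  assumes om: "oriented_matroid E L" and A: "A \<in> topes E L" and B: "B \<in> topes E L"
  shows "sep E A B = sep E B A"
proof (rule set_eqI)
  fix e show "e \<in> sep E A B \<longleftrightarrow> e \<in> sep E B A"
    using topes_zero_iff[OF om A B, of e]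
    by (cases "A e"; cases "B e") (auto simp: sep_def)
qed

lemma sep_vneg_left_topes:
  assumes om: "oriented_matroid E L" and A: "A \<in> topes E L" and B: "B \<in> topes E L"
  shows "sep E (vneg A) B = sep E A (vneg A) - sep E A B"
proof (rule set_eqI)
  fix e show "e \<in> sep E (vneg A) B \<longleftrightarrow> e \<in> sep E A (vneg A) - sep E A B"
    using topes_zero_iff[OF om A B, of e]
    by (cases "A e"; cases "B e") (auto simp: sep_def vneg_apply)
qed

lemma sep_change_base_topes:
  assumes om: "oriented_matroid E L"
    and A: "A \<in> topes E L" and B: "B \<in> topes E L" and C: "C \<in> topes E L"
  shows "sep E B C = sym_diff (sep E A B) (sep E A C)"
proof (rule set_eqI)
  fix e show "e \<in> sep E B C \<longleftrightarrow> e \<in> sym_diff (sep E A B) (sep E A C)"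
    using topes_zero_iff[OF om A B, of e] topes_zero_iff[OF om A C, of e]
    by (cases "A e"; cases "B e"; cases "C e") (auto simp: sep_def)
qed

lemma rho_Q_le_iff:
  assumes om: "oriented_matroid E L"
    and T: "T \<in> topes E L" and R: "R \<in> topes E L"
    and T': "T' \<in> topes E L" and R': "R' \<in> topes E L"
  shows "Q_le E (rho (T', R')) (rho (T, R)) \<longleftrightarrow> Q_le E (T, R) (T', R')"
proof -
  define N where "N = sep E T' (vneg T')"
  define a b c where "a = sep E T' T" and "b = sep E T' R" and "c = sep E T' R'"
  have "a \<subseteq> N" "b \<subseteq> N" "c \<subseteq> N"
    unfolding N_def a_def b_def c_def by (simp_all add: sep_subset_sep_vneg_self)
  have N: "sep E R (vneg R) = N"
    unfolding N_def by (rule sep_vneg_self_topes[OF om R T'])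
  have "sep E (vneg R) (vneg R') = sym_diff b c"
    using sep_change_base_topes[OF om T' R R'] by (simp add: b_def c_def)
  moreover have "sep E (vneg R) T' = N - b"
    using sep_vneg_left_topes[OF om R T'] sep_sym_topes[OF om R T'] by (simp add: N b_def)
  moreover have "sep E (vneg R) T = N - sym_diff b a"
    using sep_vneg_left_topes[OF om R T] sep_change_base_topes[OF om T' R T]
    by (simp add: N a_def b_def)
  ultimately have "Q_le E (rho (T', R')) (rho (T, R)) \<longleftrightarrow>
      sym_diff b c \<subseteq> N - b \<and> N - b \<subseteq> N - sym_diff b a"
    by (simp add: Q_le_def tope_le_def rho_def)
  also have "\<dots> \<longleftrightarrow> a \<subseteq> b \<and> b \<subseteq> c"
    using \<open>a \<subseteq> N\<close> \<open>b \<subseteq> N\<close> \<open>c \<subseteq> N\<close> by blast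
  also have "\<dots> \<longleftrightarrow> Q_le E (T, R) (T', R')"
    by (simp add: Q_le_def tope_le_def a_def b_def c_def)
  finally show ?thesis .
qed

lemma rho_funpow_4: "(rho ^^ 4) p = p"
  by (cases p) (simp add: rho_def numeral_eq_Suc)

theorem lemma3p13:
  fixes E :: "'e set" and L :: "'e signvec set"
  assumes "oriented_matroid E L"
  shows "bij_betw rho (topes E L \<times> topes E L) (topes E L \<times> topes E L)
    \<and> (\<forall>p\<in>topes E L \<times> topes E L. \<forall>q\<in>topes E L \<times> topes E L.
          Q_le E p q \<longleftrightarrow> Q_le E (rho q) (rho p))
    \<and> (\<forall>p\<in>topes E L \<times> topes E L. (rho ^^ 4) p = p)"
proof (intro conjI ballI)
  let ?P = "topes E L \<times> topes E L"
  show "bij_betw rho ?P ?P"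
    by (rule bij_betw_byWitness[where f' = "\<lambda>(T, R). (R, vneg T)"])
      (auto simp: rho_def vneg_in_topes[OF assms])
  show "Q_le E p q \<longleftrightarrow> Q_le E (rho q) (rho p)" if "p \<in> ?P" "q \<in> ?P" for p q
    using that rho_Q_le_iff[OF assms] by auto
  show "(rho ^^ 4) p = p" for p
    by (rule rho_funpow_4)
qed

end
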